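(* Let $(c_1,\dots,c_m)\in\mathbb{Z}^m$ be a quiddity cycle, with indices read cyclically modulo $m$. Then at least one of the following holds: (0) $m<4$ and $(c_1,\dots,c_m)\in\{(0,0),(1,1,1)\}$. (1) There is $k$ with $c_k=1$ such that $(c_1,\dots,c_{k-2},c_{k-1}-1,c_{k+1}-1,c_{k+2},\dots,c_m)$ is a quiddity cycle of length $m-1$. (2) $m$ is odd and there is $k$ with $c_k=0$ such that $(-c_1,\dots,-c_{k-2},-c_{k-1}-c_{k+1},-c_{k+2},\dots,-c_m)$ is a quiddity cycle of length $m-2$. (3) $m$ is even and there is $k$ with $c_k=-1$ such that $(-c_1,\dots,-c_{k-2},-c_{k-1}-1,-c_{k+1}-1,-c_{k+2},\dots,-c_m)$ is a quiddity cycle of length $m-1$. (4) There are $j,k$, not cyclically adjacent, with $c_j=c_k=0$, and the following sequence is a quiddity cycle of length $m-4$: - if $j$ and $k$ are at cyclic distance greater than $2$: $(c_1,\dots,c_{j-2},c_{j-1}+c_{j+1},c_{j+2},\dots,c_{k-2},c_{k-1}+c_{k+1},c_{k+2},\dots,c_m)$; - if (after possibly swapping $j,k$) $j+1=k-1$: $(c_1,\dots,c_{j-2},c_{j-1}+c_{j+1}+c_{k+1},c_{k+2},\dots,c_m)$. (5) There are $j,k$, not cyclically adjacent, with $c_j=c_k=-1$, and the following sequence is a quiddity cycle of length $m-2$: - if $j$ and $k$ are at cyclic distance greater than $2$: $(c_1,\dots,c_{j-2},c_{j-1}+1,c_{j+1}+1,c_{j+2},\dots,c_{k-2},c_{k-1}+1,c_{k+1}+1,c_{k+2},\dots,c_m)$;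 - if (after possibly swapping $j,k$) $j+1=k-1$: $(c_1,\dots,c_{j-2},c_{j-1}+1,c_{j+1}+2,c_{k+1}+1,c_{k+2},\dots,c_m)$.
   Context: $\eta(c)=\begin{pmatrix}c&-1\\1&0\end{pmatrix}$. A quiddity cycle over $\mathbb{Z}$ is $(c_1,\dots,c_m)\in\mathbb{Z}^m$ with $\eta(c_1)\cdots\eta(c_m)=-I$. *)

theory Defs
  imports "HOL-Analysis.Analysis"
begin

definition eta :: "int \<Rightarrow> int^2^2" where
  "eta c = vector [vector [c, -1], vector [1, 0]]"

definition eta_prod :: "int list \<Rightarrow> int^2^2" where
  "eta_prod cs = foldr (\<lambda>c M. eta c ** M) cs (mat 1)"

definition quiddity_cycle :: "int list \<Rightarrow> bool" where
  "quiddity_cycle cs \<longleftrightarrow> eta_prod cs = - mat 1"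

text \<open>Positions are 0-based: the list c = [c_0, ..., c_(m-1)], indices mod m.
  For a position k, rot_at c k = rotate ((k + m - 1) mod m) c
  = [c_(k-1), c_k, c_(k+1), c_(k+2), ..., c_(k-2)] (cyclically).
  The reduced sequences below are given up to this cyclic rotation.\<close>
definition rot_at :: "int list \<Rightarrow> nat \<Rightarrow> int list" where
  "rot_at c k = rotate ((k + length c - 1) mod length c) c"

text \<open>(1): (c_(k-1) - 1, c_(k+1) - 1, c_(k+2), ..., c_(k-2))\<close>
definition red1 :: "int list \<Rightarrow> nat \<Rightarrow> int list" where
  "red1 c k = (let r = rot_at c k in (r!0 - 1) # (r!2 - 1) # drop 3 r)"

text \<open>(2): (-c_(k-1) - c_(k+1), -c_(k+2), ..., -c_(k-2))\<close>
definition red2 :: "int list \<Rightarrow> nat \<Rightarrow> int list" where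
  "red2 c k = (let r = rot_at c k in (- r!0 - r!2) # map uminus (drop 3 r))"

text \<open>(3): (-c_(k-1) - 1, -c_(k+1) - 1, -c_(k+2), ..., -c_(k-2))\<close>
definition red3 :: "int list \<Rightarrow> nat \<Rightarrow> int list" where
  "red3 c k = (let r = rot_at c k in (- r!0 - 1) # (- r!2 - 1) # map uminus (drop 3 r))"

definition cdist :: "nat \<Rightarrow> nat \<Rightarrow> nat \<Rightarrow> nat" where
  "cdist m j k = (k + m - j) mod m"

text \<open>(4) with d = cdist m j k, 3 <= d <= m-3 (cyclic distance > 2):
  (c_(j-1)+c_(j+1), c_(j+2), ..., c_(k-2), c_(k-1)+c_(k+1), c_(k+2), ..., c_(j-2)).
  In r = rot_at c j, c_(j+i) sits at position i+1, so c_(k+i) at d+1+i.\<close>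
definition red4_far :: "int list \<Rightarrow> nat \<Rightarrow> nat \<Rightarrow> int list" where
  "red4_far c j k = (let r = rot_at c j; d = cdist (length c) j k in
     (r!0 + r!2) # take (d - 3) (drop 3 r) @ [r!d + r!(d+2)] @ drop (d+3) r)"

text \<open>(4) with k = j + 2 (mod m), i.e. j+1 = k-1:
  (c_(j-1)+c_(j+1)+c_(k+1), c_(k+2), ..., c_(j-2)).\<close>
definition red4_near :: "int list \<Rightarrow> nat \<Rightarrow> int list" where
  "red4_near c j = (let r = rot_at c j in (r!0 + r!2 + r!4) # drop 5 r)"

text \<open>(5) far case:
  (c_(j-1)+1, c_(j+1)+1, c_(j+2), ..., c_(k-2), c_(k-1)+1, c_(k+1)+1, c_(k+2), ..., c_(j-2)).\<close>
definition red5_far :: "int list \<Rightarrow> nat \<Rightarrow> nat \<Rightarrow> int list" where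
  "red5_far c j k = (let r = rot_at c j; d = cdist (length c) j k in
     (r!0 + 1) # (r!2 + 1) # take (d - 3) (drop 3 r) @ [r!d + 1, r!(d+2) + 1] @ drop (d+3) r)"

text \<open>(5) near case (k = j + 2 mod m):
  (c_(j-1)+1, c_(j+1)+2, c_(k+1)+1, c_(k+2), ..., c_(j-2)).\<close>
definition red5_near :: "int list \<Rightarrow> nat \<Rightarrow> int list" where
  "red5_near c j = (let r = rot_at c j in (r!0 + 1) # (r!2 + 2) # (r!4 + 1) # drop 5 r)"

end

theory Submission
  imports Defs
begin

text \<open>
  Three local identities drive every reduction:
  \<open>\<eta>(a) \<eta>(0) \<eta>(b) = -\<eta>(a+b)\<close>,
  \<open>\<eta>(a) \<eta>(1) \<eta>(b) = \<eta>(a-1) \<eta>(b-1)\<close> and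
  \<open>\<eta>(a) \<eta>(-1) \<eta>(b) = -\<eta>(a+1) \<eta>(b+1)\<close>.
  Together with the invariance of quiddity cycles under rotation and
  \<open>\<eta>(-x) = -D \<eta>(x) D\<close> for \<open>D = diag(1,-1)\<close>, they show that each
  of the reduced sequences in (1)--(5) is again a quiddity cycle.

  It remains to see that one of them applies. If (1)--(3) do not, let \<open>v = 0\<close>
  for even \<open>m\<close> and \<open>v = -1\<close> for odd \<open>m\<close>: every entry other than \<open>v\<close>
  has absolute value at least 2. Two occurrences of \<open>v\<close> at cyclic distance
  between 2 and \<open>m-2\<close> give (4) or (5). Otherwise the occurrences of \<open>v\<close> form
  one cyclic block of length \<open>l \<le> 2\<close>, and a rotation of the cycle reads
  \<open>xs @ replicate l v\<close> with all entries of \<open>xs\<close> of absolute value at least 2.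
  The first column \<open>(a, b)\<close> of the product over such \<open>xs\<close> satisfies
  \<open>|a| > |b| \<ge> 1\<close>, which rules out \<open>\<eta>(xs) \<eta>(v)^l = -I\<close>.
  Cycles of length at most 4 are checked directly.
\<close>

section \<open>Products of \<open>\<eta>\<close>-matrices and rotation\<close>

lemma eta_prod_Nil [simp]: "eta_prod [] = mat 1"
  by (simp add: eta_prod_def)

lemma eta_prod_Cons [simp]: "eta_prod (c # cs) = eta c ** eta_prod cs"
  by (simp add: eta_prod_def)

lemma eta_prod_append: "eta_prod (xs @ ys) = eta_prod xs ** eta_prod ys"
  by (induction xs) (simp_all add: matrix_mul_assoc)

lemma matrix_mul_uminus_left: "(- A) ** B = - (A ** B)"
  for A :: "'a::ring_1^'n^'m" and B :: "'a^'p^'n"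
  by (simp add: matrix_matrix_mult_def vec_eq_iff sum_negf)

lemma matrix_mul_uminus_right: "A ** (- B) = - (A ** B)"
  for A :: "'a::ring_1^'n^'m" and B :: "'a^'p^'n"
  by (simp add: matrix_matrix_mult_def vec_eq_iff sum_negf)

lemma invertible_mult_eq_neg_one_commute:
  fixes A B :: "'a::ring_1^'n^'n"
  assumes "invertible A" "A ** B = - mat 1"
  shows "B ** A = - mat 1"
proof -
  obtain A' where A': "A' ** A = mat 1"
    using assms(1) unfolding invertible_def by blast
  have "B = - A'"
    by (metis A' assms(2) matrix_mul_assoc matrix_mul_lid matrix_mul_rid matrix_mul_uminus_right)
  then show ?thesis by (simp add: matrix_mul_uminus_left A')
qed

lemma invertible_eta: "invertible (eta c)"
  unfolding invertible_def
  by (rule exI[of _ "vector [vector [0, 1], vector [-1, c]]"])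
     (simp add: eta_def matrix_matrix_mult_def mat_def vec_eq_iff forall_2 sum_2)

lemma invertible_eta_prod: "invertible (eta_prod cs)"
proof (induction cs)
  case Nil
  show ?case unfolding invertible_def by (auto intro: exI[of _ "mat 1"])
qed (simp add: invertible_eta invertible_mult)

lemma quiddity_cycle_append_swap:
  "quiddity_cycle (xs @ ys) \<Longrightarrow> quiddity_cycle (ys @ xs)"
  unfolding quiddity_cycle_def eta_prod_append
  by (rule invertible_mult_eq_neg_one_commute[OF invertible_eta_prod])

lemma quiddity_cycle_rotate: "quiddity_cycle c \<Longrightarrow> quiddity_cycle (rotate n c)"
  by (metis append_take_drop_id quiddity_cycle_append_swap rotate_drop_take)

section \<open>Local reductions\<close>

lemma eta_prod_zero_reduce: "eta_prod (a # 0 # b # cs) = - eta_prod ((a + b) # cs)"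
proof -
  have "eta a ** eta 0 ** eta b = - eta (a + b)"
    by (simp add: eta_def matrix_matrix_mult_def vec_eq_iff forall_2 sum_2)
  then show ?thesis by (simp add: matrix_mul_assoc matrix_mul_uminus_left)
qed

lemma eta_prod_one_reduce: "eta_prod (a # 1 # b # cs) = eta_prod ((a - 1) # (b - 1) # cs)"
proof -
  have "eta a ** eta 1 ** eta b = eta (a - 1) ** eta (b - 1)"
    by (simp add: eta_def matrix_matrix_mult_def vec_eq_iff forall_2 sum_2 algebra_simps)
  then show ?thesis by (simp add: matrix_mul_assoc)
qed

lemma eta_prod_neg_one_reduce:
  "eta_prod (a # -1 # b # cs) = - eta_prod ((a + 1) # (b + 1) # cs)"
proof -
  have "eta a ** eta (-1) ** eta b = - (eta (a + 1) ** eta (b + 1))"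
    by (simp add: eta_def matrix_matrix_mult_def vec_eq_iff forall_2 sum_2 algebra_simps)
  then show ?thesis by (simp add: matrix_mul_assoc matrix_mul_uminus_left)
qed

definition sign_diag :: "int^2^2" where
  "sign_diag = vector [vector [1, 0], vector [0, -1]]"

lemma sign_diag_square: "sign_diag ** sign_diag = mat 1"
  by (simp add: sign_diag_def matrix_matrix_mult_def mat_def vec_eq_iff forall_2 sum_2)

lemma eta_uminus: "eta (- c) = - (sign_diag ** eta c ** sign_diag)"
  by (simp add: eta_def sign_diag_def matrix_matrix_mult_def vec_eq_iff forall_2 sum_2)

lemma eta_prod_map_uminus:
  "eta_prod (map uminus cs) =
     (if even (length cs) then sign_diag ** eta_prod cs ** sign_diag
      else - (sign_diag ** eta_prod cs ** sign_diag))"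
proof (induction cs)
  case (Cons c cs)
  have "sign_diag ** eta c ** sign_diag ** (sign_diag ** eta_prod cs ** sign_diag)
      = sign_diag ** (eta c ** eta_prod cs) ** sign_diag"
    by (simp add: matrix_mul_assoc flip: matrix_mul_assoc[of _ sign_diag sign_diag]
        add: sign_diag_square)
  with Cons show ?case
    by (simp add: eta_uminus matrix_mul_uminus_left matrix_mul_uminus_right)
qed (simp add: sign_diag_square)

lemma quiddity_cycle_map_uminus:
  "odd (length cs) \<Longrightarrow> eta_prod cs = mat 1 \<Longrightarrow> quiddity_cycle (map uminus cs)"
  by (simp add: quiddity_cycle_def eta_prod_map_uminus sign_diag_def matrix_matrix_mult_def
      mat_def vec_eq_iff forall_2 sum_2)

lemma quiddity_cycle_rot_at: "quiddity_cycle c \<Longrightarrow> quiddity_cycle (rot_at c k)"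
  by (simp add: rot_at_def quiddity_cycle_rotate)

lemma length_rot_at [simp]: "length (rot_at c k) = length c"
  by (simp add: rot_at_def)

lemma nth_rot_at: "i < length c \<Longrightarrow> rot_at c k ! i = c ! ((k + length c - 1 + i) mod length c)"
  by (simp add: rot_at_def nth_rotate mod_add_left_eq)

lemma nth_rot_at_cdist:
  assumes "j < length c" "k < length c" "cdist (length c) j k + 1 < length c"
  shows "rot_at c j ! (cdist (length c) j k + 1) = c ! k"
proof -
  let ?m = "length c"
  have "j + ?m - 1 + (cdist ?m j k + 1) = j + ?m + (k + ?m - j) mod ?m"
    using assms by (simp add: cdist_def)
  then have "(j + ?m - 1 + (cdist ?m j k + 1)) mod ?m = (j + ?m + (k + ?m - j)) mod ?m"
    by (simp add: mod_add_right_eq)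
  also have "j + ?m + (k + ?m - j) = k + ?m * 2" using assms by simp
  finally show ?thesis
    using assms by (simp add: nth_rot_at)
qed

lemma nth_rot_at_1: "k < length c \<Longrightarrow> 2 \<le> length c \<Longrightarrow> rot_at c k ! 1 = c ! k"
  using nth_rot_at_cdist[of k c k] by (simp add: cdist_def)

lemma drop_eq_nth_Cons_3:
  "n + 3 \<le> length xs \<Longrightarrow> drop n xs = xs ! n # xs ! (n + 1) # xs ! (n + 2) # drop (n + 3) xs"
  using Cons_nth_drop_Suc[of n xs] Cons_nth_drop_Suc[of "n + 1" xs] Cons_nth_drop_Suc[of "n + 2" xs]
  by (simp add: numeral_eq_Suc)

lemma rot_at_split:
  assumes "3 \<le> length c" "k < length c"
  defines "r \<equiv> rot_at c k"
  shows "r = r ! 0 # c ! k # r ! 2 # drop 3 r"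
proof -
  have "drop 0 r = r ! 0 # r ! 1 # r ! 2 # drop 3 r"
    using assms drop_eq_nth_Cons_3[of 0 r, unfolded add_0] by simp
  moreover have "r ! 1 = c ! k" unfolding r_def using assms by (intro nth_rot_at_1) auto
  ultimately show ?thesis by (metis drop0)
qed

lemma rot_at_split_near:
  assumes "5 \<le> length c" "j < length c" "k < length c" "cdist (length c) j k = 2"
  defines "r \<equiv> rot_at c j"
  shows "r = r ! 0 # c ! j # r ! 2 # c ! k # r ! 4 # drop 5 r"
proof -
  have "r = r ! 0 # c ! j # r ! 2 # drop 3 r"
    using assms rot_at_split[of c j] by simp
  moreover have "drop 3 r = r ! 3 # r ! 4 # drop 5 r"
    using assms Cons_nth_drop_Suc[of 3 r] Cons_nth_drop_Suc[of 4 r] by (simp add: numeral_eq_Suc)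
  moreover have "r ! 3 = c ! k" using nth_rot_at_cdist[of j c k] assms by simp
  ultimately show ?thesis by metis
qed

lemma rot_at_split_far:
  fixes c :: "int list" and j k :: nat
  defines "r \<equiv> rot_at c j" and "d \<equiv> cdist (length c) j k"
  assumes "j < length c" "k < length c" "3 \<le> d" "d + 3 \<le> length c"
  shows "r = r ! 0 # c ! j # r ! 2 # take (d - 3) (drop 3 r) @ r ! d # c ! k # r ! (d + 2) # drop (d + 3) r"
proof -
  have "drop 3 r = take (d - 3) (drop 3 r) @ drop d r"
    using assms by (metis append_take_drop_id drop_drop le_add_diff_inverse2)
  moreover have "drop d r = r ! d # r ! (d + 1) # r ! (d + 2) # drop (d + 3) r"
    using assms drop_eq_nth_Cons_3[of d r] by simp
  moreover have "r ! (d + 1) = c ! k"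
    using nth_rot_at_cdist[of j c k] assms by simp
  ultimately show ?thesis
    using rot_at_split[of c j] assms by (simp add: r_def)
qed

lemma cdist_add_mod: "j < m \<Longrightarrow> t < m \<Longrightarrow> cdist m j ((j + t) mod m) = t"
proof -
  assume "j < m" "t < m"
  then have "((j + t) mod m + m - j) mod m = ((j + t) mod m + (m - j)) mod m" by simp
  also have "\<dots> = (j + t + (m - j)) mod m" by (simp add: mod_add_left_eq)
  also have "j + t + (m - j) = t + m" using \<open>j < m\<close> by simp
  finally show ?thesis using \<open>t < m\<close> by (simp add: cdist_def)
qed

lemma cdist_add_mod_swap:
  assumes "j < m" "0 < t" "t < m"
  shows "cdist m ((j + t) mod m) j = m - t"
proof -
  have "((j + t) mod m + (m - t)) mod m = (j + t + (m - t)) mod m" by (simp add: mod_add_left_eq)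
  also have "\<dots> = j" using assms by simp
  finally show ?thesis
    using cdist_add_mod[of "(j + t) mod m" m "m - t"] assms by simp
qed

lemma quiddity_cycle_red1:
  assumes "quiddity_cycle c" "3 \<le> length c" "k < length c" "c ! k = 1"
  shows "quiddity_cycle (red1 c k) \<and> length (red1 c k) = length c - 1"
proof -
  let ?r = "rot_at c k"
  have "eta_prod ?r = eta_prod (red1 c k)"
    using rot_at_split[OF assms(2,3)] assms(4)
    by (metis eta_prod_one_reduce red1_def)
  then show ?thesis
    using quiddity_cycle_rot_at[OF assms(1)] assms(2)
    by (simp add: quiddity_cycle_def red1_def Let_def)
qed

lemma quiddity_cycle_red2:
  assumes "quiddity_cycle c" "3 \<le> length c" "k < length c" "c ! k = 0" "odd (length c)"
  shows "quiddity_cycle (red2 c k) \<and> length (red2 c k) = length c - 2"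
proof -
  let ?r = "rot_at c k"
  let ?s = "(?r ! 0 + ?r ! 2) # drop 3 ?r"
  have "eta_prod ?r = - eta_prod ?s"
    using rot_at_split[OF assms(2,3)] assms(4) by (metis eta_prod_zero_reduce)
  then have "eta_prod ?s = mat 1"
    using quiddity_cycle_rot_at[OF assms(1)] by (simp add: quiddity_cycle_def)
  moreover have "red2 c k = map uminus ?s" by (simp add: red2_def Let_def)
  ultimately show ?thesis
    using quiddity_cycle_map_uminus[of ?s] assms(2,5) by simp
qed

lemma quiddity_cycle_red3:
  assumes "quiddity_cycle c" "3 \<le> length c" "k < length c" "c ! k = -1" "even (length c)"
  shows "quiddity_cycle (red3 c k) \<and> length (red3 c k) = length c - 1"
proof -
  let ?r = "rot_at c k"
  let ?s = "(?r ! 0 + 1) # (?r ! 2 + 1) # drop 3 ?r"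
  have "eta_prod ?r = - eta_prod ?s"
    using rot_at_split[OF assms(2,3)] assms(4) by (metis eta_prod_neg_one_reduce)
  then have "eta_prod ?s = mat 1"
    using quiddity_cycle_rot_at[OF assms(1)] by (simp add: quiddity_cycle_def)
  moreover have "red3 c k = map uminus ?s" by (simp add: red3_def Let_def)
  ultimately show ?thesis
    using quiddity_cycle_map_uminus[of ?s] assms(2,5) by simp
qed

lemma quiddity_cycle_red4_far:
  assumes "quiddity_cycle c" "j < length c" "k < length c" "c ! j = 0" "c ! k = 0"
    "3 \<le> cdist (length c) j k" "cdist (length c) j k + 3 \<le> length c"
  shows "quiddity_cycle (red4_far c j k) \<and> length (red4_far c j k) = length c - 4"
proof -
  define r where "r = rot_at c j"
  define d where "d = cdist (length c) j k"
  let ?front = "(r ! 0 + r ! 2) # take (d - 3) (drop 3 r)"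
  have "r = r ! 0 # 0 # r ! 2 # take (d - 3) (drop 3 r) @ r ! d # 0 # r ! (d + 2) # drop (d + 3) r"
    using rot_at_split_far[of j c k] assms unfolding r_def d_def by metis
  then have "eta_prod r = - eta_prod (?front @ r ! d # 0 # r ! (d + 2) # drop (d + 3) r)"
    by (metis eta_prod_zero_reduce append_Cons)
  also have "\<dots> = eta_prod (?front @ (r ! d + r ! (d + 2)) # drop (d + 3) r)"
    by (simp only: eta_prod_append eta_prod_zero_reduce matrix_mul_uminus_right minus_minus)
  also have "?front @ (r ! d + r ! (d + 2)) # drop (d + 3) r = red4_far c j k"
    by (simp add: red4_far_def Let_def r_def d_def)
  finally show ?thesis
    using quiddity_cycle_rot_at[OF assms(1)] assms(6,7)
    by (simp add: quiddity_cycle_def r_def red4_far_def Let_def d_def)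
qed

lemma quiddity_cycle_red4_near:
  assumes "quiddity_cycle c" "j < length c" "k < length c" "c ! j = 0" "c ! k = 0"
    "cdist (length c) j k = 2" "5 \<le> length c"
  shows "quiddity_cycle (red4_near c j) \<and> length (red4_near c j) = length c - 4"
proof -
  let ?r = "rot_at c j"
  have "eta_prod ?r = - eta_prod ((?r ! 0 + ?r ! 2) # 0 # ?r ! 4 # drop 5 ?r)"
    using rot_at_split_near[OF assms(7,2,3,6)] assms(4,5) by (metis eta_prod_zero_reduce)
  also have "\<dots> = eta_prod (red4_near c j)"
    by (simp only: eta_prod_zero_reduce minus_minus) (simp add: red4_near_def Let_def)
  finally show ?thesis
    using quiddity_cycle_rot_at[OF assms(1)] assms(7)
    by (simp add: quiddity_cycle_def red4_near_def Let_def)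
qed

lemma quiddity_cycle_red5_far:
  assumes "quiddity_cycle c" "j < length c" "k < length c" "c ! j = -1" "c ! k = -1"
    "3 \<le> cdist (length c) j k" "cdist (length c) j k + 3 \<le> length c"
  shows "quiddity_cycle (red5_far c j k) \<and> length (red5_far c j k) = length c - 2"
proof -
  define r where "r = rot_at c j"
  define d where "d = cdist (length c) j k"
  let ?front = "(r ! 0 + 1) # (r ! 2 + 1) # take (d - 3) (drop 3 r)"
  have "r = r ! 0 # -1 # r ! 2 # take (d - 3) (drop 3 r) @ r ! d # -1 # r ! (d + 2) # drop (d + 3) r"
    using rot_at_split_far[of j c k] assms unfolding r_def d_def by metis
  then have "eta_prod r = - eta_prod (?front @ r ! d # -1 # r ! (d + 2) # drop (d + 3) r)"
    by (metis eta_prod_neg_one_reduce append_Cons)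
  also have "\<dots> = eta_prod (?front @ (r ! d + 1) # (r ! (d + 2) + 1) # drop (d + 3) r)"
    by (simp only: eta_prod_append eta_prod_neg_one_reduce matrix_mul_uminus_right minus_minus)
  also have "?front @ (r ! d + 1) # (r ! (d + 2) + 1) # drop (d + 3) r = red5_far c j k"
    by (simp add: red5_far_def Let_def r_def d_def)
  finally show ?thesis
    using quiddity_cycle_rot_at[OF assms(1)] assms(6,7)
    by (simp add: quiddity_cycle_def r_def red5_far_def Let_def d_def)
qed

lemma quiddity_cycle_red5_near:
  assumes "quiddity_cycle c" "j < length c" "k < length c" "c ! j = -1" "c ! k = -1"
    "cdist (length c) j k = 2" "5 \<le> length c"
  shows "quiddity_cycle (red5_near c j) \<and> length (red5_near c j) = length c - 2"
proof -
  let ?r = "rot_at c j"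
  have "eta_prod ?r = - eta_prod ((?r ! 0 + 1) # (?r ! 2 + 1) # -1 # ?r ! 4 # drop 5 ?r)"
    using rot_at_split_near[OF assms(7,2,3,6)] assms(4,5) by (metis eta_prod_neg_one_reduce)
  also have "\<dots> = eta_prod (red5_near c j)"
    by (simp only: eta_prod_Cons[of "?r ! 0 + 1"] eta_prod_neg_one_reduce matrix_mul_uminus_right
        minus_minus) (simp add: red5_near_def Let_def algebra_simps)
  finally show ?thesis
    using quiddity_cycle_rot_at[OF assms(1)] assms(7)
    by (simp add: quiddity_cycle_def red5_near_def Let_def)
qed

lemma zero_pair_reduction:
  fixes c :: "int list"
  defines "m \<equiv> length c"
  assumes "quiddity_cycle c" "5 \<le> m" "j < m" "2 \<le> t" "t + 2 \<le> m"
    "c ! j = 0" "c ! ((j + t) mod m) = 0"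
  shows "\<exists>j<m. \<exists>k<m. c!j = 0 \<and> c!k = 0 \<and>
         ((3 \<le> cdist m j k \<and> cdist m j k + 3 \<le> m \<and> quiddity_cycle (red4_far c j k)
             \<and> length (red4_far c j k) = m - 4)
          \<or> (cdist m j k = 2 \<and> 5 \<le> m \<and> quiddity_cycle (red4_near c j)
             \<and> length (red4_near c j) = m - 4))"
proof -
  define k where "k = (j + t) mod m"
  have k: "k < m" "cdist m j k = t" "cdist m k j = m - t"
    using assms cdist_add_mod[of j m t] cdist_add_mod_swap[of j m t] unfolding k_def
    by (simp_all del: length_greater_0_conv)
  consider "3 \<le> t" "t + 3 \<le> m" | "t = 2" | "t + 2 = m" using assms by linarith
  then show ?thesis
  proof cases
    case 1
    then show ?thesis using quiddity_cycle_red4_far[of c j k] assms k unfolding k_def[symmetric] by blast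
  next
    case 2
    then show ?thesis using quiddity_cycle_red4_near[of c j k] assms k unfolding k_def[symmetric] by blast
  next
    case 3
    then have "cdist m k j = 2" using k by simp
    then show ?thesis using quiddity_cycle_red4_near[of c k j] assms k unfolding k_def[symmetric] by blast
  qed
qed

lemma neg_one_pair_reduction:
  fixes c :: "int list"
  defines "m \<equiv> length c"
  assumes "quiddity_cycle c" "5 \<le> m" "j < m" "2 \<le> t" "t + 2 \<le> m"
    "c ! j = -1" "c ! ((j + t) mod m) = -1"
  shows "\<exists>j<m. \<exists>k<m. c!j = -1 \<and> c!k = -1 \<and>
         ((3 \<le> cdist m j k \<and> cdist m j k + 3 \<le> m \<and> quiddity_cycle (red5_far c j k)
             \<and> length (red5_far c j k) = m - 2)
          \<or> (cdist m j k = 2 \<and> 5 \<le> m \<and> quiddity_cycle (red5_near c j)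
             \<and> length (red5_near c j) = m - 2))"
proof -
  define k where "k = (j + t) mod m"
  have k: "k < m" "cdist m j k = t" "cdist m k j = m - t"
    using assms cdist_add_mod[of j m t] cdist_add_mod_swap[of j m t] unfolding k_def
    by (simp_all del: length_greater_0_conv)
  consider "3 \<le> t" "t + 3 \<le> m" | "t = 2" | "t + 2 = m" using assms by linarith
  then show ?thesis
  proof cases
    case 1
    then show ?thesis using quiddity_cycle_red5_far[of c j k] assms k unfolding k_def[symmetric] by blast
  next
    case 2
    then show ?thesis using quiddity_cycle_red5_near[of c j k] assms k unfolding k_def[symmetric] by blast
  next
    case 3
    then have "cdist m k j = 2" using k by simp
    then show ?thesis using quiddity_cycle_red5_near[of c k j] assms k unfolding k_def[symmetric] by blast
  qed
qed

section \<open>Cycles admitting none of the single-entry reductions\<close>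

lemma quiddity_cycle_length_less_4:
  assumes "quiddity_cycle c" "length c < 4"
  shows "c \<in> {[0, 0], [1, 1, 1]}"
proof -
  have "c = [] \<or> (\<exists>a. c = [a]) \<or> (\<exists>a b. c = [a, b]) \<or> (\<exists>a b d. c = [a, b, d])"
    using assms(2) by (cases c; cases "tl c"; cases "tl (tl c)"; cases "tl (tl (tl c))") auto
  then show ?thesis
    using assms(1)
    by (auto simp: quiddity_cycle_def eta_def matrix_matrix_mult_def mat_def vec_eq_iff forall_2 sum_2
        algebra_simps)
qed

lemma quiddity_cycle_length_4:
  assumes "quiddity_cycle [a, b, d, e]"
  shows "b \<in> {1, -1} \<or> d \<in> {1, -1}"
proof -
  have "b * d = 2"
    using assms
    by (simp add: quiddity_cycle_def eta_def matrix_matrix_mult_def mat_def vec_eq_iff forall_2 sum_2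
        algebra_simps)
  then have "b \<noteq> 0" "d \<noteq> 0" by auto
  moreover have "\<bar>b\<bar> < 2 \<or> \<bar>d\<bar> < 2"
  proof (rule ccontr)
    assume "\<not> ?thesis"
    then have "2 * 2 \<le> \<bar>b\<bar> * \<bar>d\<bar>" by (intro mult_mono) auto
    with \<open>b * d = 2\<close> show False by (simp add: abs_mult[symmetric])
  qed
  ultimately show ?thesis by auto
qed

lemma eta_prod_first_column_growth:
  assumes "cs \<noteq> []" "\<forall>c\<in>set cs. 2 \<le> \<bar>c\<bar>"
  shows "\<bar>eta_prod cs $ 2 $ 1\<bar> < \<bar>eta_prod cs $ 1 $ 1\<bar> \<and> 1 \<le> \<bar>eta_prod cs $ 2 $ 1\<bar>"
  using assms
proof (induction cs)
  case (Cons c cs)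
  have entries: "(eta c ** P) $ 1 $ 1 = c * P $ 1 $ 1 - P $ 2 $ 1" "(eta c ** P) $ 2 $ 1 = P $ 1 $ 1"
    for P :: "int^2^2"
    by (simp_all add: eta_def matrix_matrix_mult_def sum_2)
  show ?case
  proof (cases "cs = []")
    case True
    with Cons.prems show ?thesis by (simp add: eta_def)
  next
    case False
    let ?a = "eta_prod cs $ 1 $ 1" and ?b = "eta_prod cs $ 2 $ 1"
    from Cons False have IH: "\<bar>?b\<bar> < \<bar>?a\<bar>" "1 \<le> \<bar>?b\<bar>" by auto
    have "2 * \<bar>?a\<bar> \<le> \<bar>c * ?a\<bar>"
      using Cons.prems by (simp add: abs_mult mult_right_mono)
    then have "\<bar>?a\<bar> < \<bar>c * ?a - ?b\<bar>" using IH by linarith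
    with IH show ?thesis by (simp add: entries)
  qed
qed simp

lemma growing_mult_short_tail_neq_neg_one:
  fixes P :: "int^2^2"
  assumes "\<bar>P $ 2 $ 1\<bar> < \<bar>P $ 1 $ 1\<bar>" "1 \<le> \<bar>P $ 2 $ 1\<bar>" "v \<in> {0, -1}" "l \<le> 2"
  shows "P ** eta_prod (replicate l v) \<noteq> - mat 1"
proof -
  from assms(4) consider "l = 0" | "l = 1" | "l = 2" by linarith
  then show ?thesis
    using assms(1-3)
    by cases (auto simp: numeral_2_eq_2 eta_def matrix_matrix_mult_def mat_def vec_eq_iff forall_2 sum_2)
qed

lemma not_quiddity_cycle_growing_short_tail:
  assumes "xs \<noteq> []" "\<forall>x\<in>set xs. 2 \<le> \<bar>x\<bar>" "v \<in> {0, -1}" "l \<le> 2"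
  shows "\<not> quiddity_cycle (xs @ replicate l v)"
  using growing_mult_short_tail_neq_neg_one[OF _ _ assms(3,4)]
    eta_prod_first_column_growth[OF assms(1,2)]
  by (simp add: quiddity_cycle_def eta_prod_append)

lemma value_block:
  fixes c :: "'a list" and v :: 'a
  defines "m \<equiv> length c"
  assumes "4 \<le> m"
    and apart: "\<And>j t. j < m \<Longrightarrow> 2 \<le> t \<Longrightarrow> t + 2 \<le> m \<Longrightarrow> c ! j = v \<Longrightarrow> c ! ((j + t) mod m) \<noteq> v"
  obtains p l where "l \<le> 2" "\<And>t. t < m \<Longrightarrow> rotate p c ! t = v \<longleftrightarrow> t < l"
proof (cases "\<exists>i<m. c ! i = v")
  case False
  then show ?thesis using that[of 0 0] by simp
next
  case True
  then obtain i where i: "i < m" "c ! i = v" by blast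
  \<comment> \<open>Start the block at an occurrence whose cyclic predecessor is not \<open>v\<close>; if the
    predecessor of \<open>i\<close> is \<open>v\<close>, its own predecessor lies at distance \<open>m - 2\<close> from \<open>i\<close>.\<close>
  have "\<exists>p<m. c ! p = v \<and> c ! ((p + (m - 1)) mod m) \<noteq> v"
  proof (cases "c ! ((i + (m - 1)) mod m) = v")
    case True
    have "((i + (m - 1)) mod m + (m - 1)) mod m = (i + (m - 1) + (m - 1)) mod m"
      by (rule mod_add_left_eq)
    also have "i + (m - 1) + (m - 1) = (i + (m - 2)) + m" using assms(2) by simp
    also have "((i + (m - 2)) + m) mod m = (i + (m - 2)) mod m" by (rule mod_add_self2)
    finally have "c ! (((i + (m - 1)) mod m + (m - 1)) mod m) \<noteq> v"
      using apart[OF i(1) _ _ i(2), of "m - 2"] assms(2) by simp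
    with True show ?thesis using assms(2) by (intro exI[of _ "(i + (m - 1)) mod m"]) simp
  qed (use i in blast)
  then obtain p where p: "p < m" "c ! p = v" "c ! ((p + (m - 1)) mod m) \<noteq> v" by blast
  define l where "l = (if c ! ((p + 1) mod m) = v then 2 else 1 :: nat)"
  have "rotate p c ! t = v \<longleftrightarrow> t < l" if "t < m" for t
  proof -
    have l: "l \<le> 2" "0 < l" "1 < l \<longleftrightarrow> c ! ((p + 1) mod m) = v" by (simp_all add: l_def)
    consider "t = 0" | "t = 1" | "2 \<le> t" "t + 2 \<le> m" | "t = m - 1"
      using \<open>t < m\<close> by linarith
    then have "c ! ((p + t) mod m) = v \<longleftrightarrow> t < l"
    proof cases
      case 3
      then show ?thesis using apart[OF p(1) _ _ p(2)] l(1) by auto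
    next
      case 4
      then show ?thesis using p(3) l(1) assms(2) by auto
    qed (use p l in auto)
    then show ?thesis using that by (simp add: nth_rotate m_def)
  qed
  moreover have "l \<le> 2" by (simp add: l_def)
  ultimately show ?thesis using that by blast
qed

lemma quiddity_cycle_has_apart_pair:
  fixes c :: "int list" and v :: int
  defines "m \<equiv> length c"
  assumes "quiddity_cycle c" "4 \<le> m" "v \<in> {0, -1}" "\<forall>x\<in>set c. x \<noteq> v \<longrightarrow> 2 \<le> \<bar>x\<bar>"
  shows "\<exists>j<m. \<exists>t. 2 \<le> t \<and> t + 2 \<le> m \<and> c ! j = v \<and> c ! ((j + t) mod m) = v"
proof (rule ccontr)
  assume "\<not> ?thesis"
  then have apart: "c ! ((j + t) mod length c) \<noteq> v"
    if "j < length c" "2 \<le> t" "t + 2 \<le> length c" "c ! j = v" for j t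
    using that unfolding m_def by blast
  obtain p l where l: "l \<le> 2" "\<And>t. t < m \<Longrightarrow> rotate p c ! t = v \<longleftrightarrow> t < l"
    unfolding m_def by (rule value_block[of c v, OF _ apart]) (use assms(3) in \<open>auto simp: m_def\<close>)
  define r where "r = rotate p c"
  have len: "length r = m" by (simp add: r_def m_def)
  have block: "r ! t = v \<longleftrightarrow> t < l" if "t < m" for t
    using l(2)[OF that] by (simp add: r_def)
  have "take l r = replicate l v"
  proof (rule nth_equalityI)
    show "length (take l r) = length (replicate l v)" using l(1) assms(3) len by simp
  qed (use block l(1) assms(3) in simp)
  then have "rotate l r = drop l r @ replicate l v"
    using l(1) assms(3) len by (simp add: rotate_drop_take)
  moreover have "quiddity_cycle (rotate l r)"
    using assms(2) by (simp add: r_def quiddity_cycle_rotate)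
  moreover have "drop l r \<noteq> []" using l(1) assms(3) len by simp
  moreover have "\<forall>x\<in>set (drop l r). 2 \<le> \<bar>x\<bar>"
  proof
    fix x assume "x \<in> set (drop l r)"
    then obtain i where "i < m - l" "x = r ! (l + i)"
      using len by (auto simp: in_set_conv_nth)
    then have i: "l \<le> l + i" "l + i < m" "x = r ! (l + i)" by simp_all
    then have "x \<noteq> v" using block by simp
    moreover have "x \<in> set c"
      using i len nth_mem[of "l + i" r] by (simp add: r_def)
    ultimately show "2 \<le> \<bar>x\<bar>" using assms(5) by blast
  qed
  ultimately show False
    using not_quiddity_cycle_growing_short_tail[OF _ _ assms(4) l(1)] by simp
qed

lemma quiddity_cycle_apart_pair:
  fixes c :: "int list"
  defines "m \<equiv> length c" and "v \<equiv> if even (length c) then 0 else -1 :: int"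
  assumes "quiddity_cycle c" "4 \<le> m" "1 \<notin> set c"
    "odd m \<Longrightarrow> 0 \<notin> set c" "even m \<Longrightarrow> -1 \<notin> set c"
  shows "5 \<le> m \<and> (\<exists>j<m. \<exists>t. 2 \<le> t \<and> t + 2 \<le> m \<and> c ! j = v \<and> c ! ((j + t) mod m) = v)"
proof -
  have "m \<noteq> 4"
  proof
    assume "m = 4"
    then obtain a b d e where c: "c = [a, b, d, e]"
      by (auto simp: m_def length_Suc_conv numeral_eq_Suc)
    then have "b \<in> {1, -1} \<or> d \<in> {1, -1}" using quiddity_cycle_length_4 assms(3) by simp
    with c show False using assms(5,7) \<open>m = 4\<close> by auto
  qed
  moreover have "v \<in> {0, -1}" by (simp add: v_def)
  moreover have "\<forall>x\<in>set c. x \<noteq> v \<longrightarrow> 2 \<le> \<bar>x\<bar>"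
  proof (intro ballI impI)
    fix x assume "x \<in> set c" "x \<noteq> v"
    then have "x \<noteq> 1" "x \<noteq> 0" "x \<noteq> -1"
      using assms(5-7) by (auto simp: v_def m_def split: if_splits)
    then show "2 \<le> \<bar>x\<bar>" by linarith
  qed
  ultimately show ?thesis
    using quiddity_cycle_has_apart_pair[of c v, folded m_def] assms(3,4) by simp
qed

theorem theorem6p4:
  fixes c :: "int list"
  defines "m \<equiv> length c"
  assumes "quiddity_cycle c"
  shows "(m < 4 \<and> c \<in> {[0, 0], [1, 1, 1]})
    \<or> (\<exists>k<m. c!k = 1 \<and> quiddity_cycle (red1 c k) \<and> length (red1 c k) = m - 1)
    \<or> (odd m \<and> (\<exists>k<m. c!k = 0 \<and> quiddity_cycle (red2 c k) \<and> length (red2 c k) = m - 2))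
    \<or> (even m \<and> (\<exists>k<m. c!k = -1 \<and> quiddity_cycle (red3 c k) \<and> length (red3 c k) = m - 1))
    \<or> (\<exists>j<m. \<exists>k<m. c!j = 0 \<and> c!k = 0 \<and>
         ((3 \<le> cdist m j k \<and> cdist m j k + 3 \<le> m \<and> quiddity_cycle (red4_far c j k)
             \<and> length (red4_far c j k) = m - 4)
          \<or> (cdist m j k = 2 \<and> 5 \<le> m \<and> quiddity_cycle (red4_near c j)
             \<and> length (red4_near c j) = m - 4)))
    \<or> (\<exists>j<m. \<exists>k<m. c!j = -1 \<and> c!k = -1 \<and>
         ((3 \<le> cdist m j k \<and> cdist m j k + 3 \<le> m \<and> quiddity_cycle (red5_far c j k)
             \<and> length (red5_far c j k) = m - 2)
          \<or> (cdist m j k = 2 \<and> 5 \<le> m \<and> quiddity_cycle (red5_near c j)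
             \<and> length (red5_near c j) = m - 2)))"
proof -
  note qc = \<open>quiddity_cycle c\<close>
  consider (short) "m < 4"
    | (one) "4 \<le> m" "1 \<in> set c"
    | (zero_odd) "4 \<le> m" "odd m" "0 \<in> set c"
    | (neg_one_even) "4 \<le> m" "even m" "-1 \<in> set c"
    | (generic) "4 \<le> m" "1 \<notin> set c" "odd m \<Longrightarrow> 0 \<notin> set c" "even m \<Longrightarrow> -1 \<notin> set c"
    using not_less by blast
  then show ?thesis
  proof cases
    case short
    then show ?thesis using quiddity_cycle_length_less_4[OF qc] by (simp add: m_def)
  next
    case one
    then show ?thesis using quiddity_cycle_red1[OF qc] by (auto simp: m_def in_set_conv_nth)
  next
    case zero_odd
    then show ?thesis using quiddity_cycle_red2[OF qc] by (auto simp: m_def in_set_conv_nth)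
  next
    case neg_one_even
    then show ?thesis using quiddity_cycle_red3[OF qc] by (auto simp: m_def in_set_conv_nth)
  next
    case generic
    then obtain j t where jt: "5 \<le> m" "j < m" "2 \<le> t" "t + 2 \<le> m"
      "c ! j = (if even m then 0 else -1)" "c ! ((j + t) mod m) = (if even m then 0 else -1)"
      using quiddity_cycle_apart_pair[of c, folded m_def, OF qc] by blast
    show ?thesis
    proof (cases "even m")
      case True
      with jt have "c ! j = 0" "c ! ((j + t) mod m) = 0" by simp_all
      from zero_pair_reduction[of c, folded m_def, OF qc jt(1-4) this] show ?thesis by blast
    next
      case False
      with jt have "c ! j = -1" "c ! ((j + t) mod m) = -1" by simp_all
      from neg_one_pair_reduction[of c, folded m_def, OF qc jt(1-4) this] show ?thesis by blast
    qed
  qed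
qed

end
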